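(* Let $\mathcal{M}=(\mathcal{S},\mathcal{A},\mathcal{P},r,\gamma)$ be a finite MDP with $|\mathcal{S}|=S$, $|\mathcal{A}|=A$, $\gamma\in[0,1)$. Let $\mathcal{F}\subseteq\mathbb{R}^{SA}$ be closed, let $w\in\mathbb{R}^{SA}$ have strictly positive entries and $\|f\|_{w,1}:=\sum_{s,a}w(s,a)|f(s,a)|$. Let $\mu_0$ be a stationary policy and $f_0\in\mathcal{F}$ with $T_{\mu_0}f_0\geq f_0$. Let $(f_k)$, $(\mu_k)$ be generated by Reliable Policy Iteration with the norm $\|\cdot\|_{w,1}$: for $k=0,1,2,\dots$, $$f_{k+1}\in\arg\max_{f\in\mathcal{F}}\ \|f-f_k\|_{w,1}\quad\text{subject to}\quad T_{\mu_k} f\geq f\geq f_k,$$ and $\mu_{k+1}$ is a deterministic policy greedy with respect to $f_{k+1}$. Then for every $k\ge0$, $$f_{k+1}\in\arg\min_{f\in\mathcal{F}}\ \|f-Q_{\mu_k}\|_{w,1}\quad\text{subject to}\quad T_{\mu_k}f\geq f\geq f_k.$$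
   Context: Functions $\mathcal{S}\times\mathcal{A}\to\mathbb{R}$ are identified with vectors in $\mathbb{R}^{SA}$. A stationary policy is a map $\mu:\mathcal{S}\to\Delta(\mathcal{A})$; its Q-value function is $Q_\mu(s,a)=\mathbb{E}[\sum_{t\ge0}\gamma^t r(s_t,a_t)\mid s_0=s,a_0=a]$ with $s_{t+1}\sim\mathcal{P}(\cdot|s_t,a_t)$, $a_{t+1}\sim\mu(\cdot|s_{t+1})$. The Bellman operator is $T_\mu Q(s,a)=r(s,a)+\gamma\sum_{s',a'}\mathcal{P}(s'|s,a)\mu(a'|s')Q(s',a')$. A deterministic policy $\mu$ is greedy with respect to $f$ if $\mu(s)\in\arg\max_a f(s,a)$ for all $s$. Vector inequalities are coordinate-wise. *)

theory Defs
  imports "HOL-Analysis.Analysis"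
begin

text \<open>Q-functions are vectors
  in R^{SA}, represented as functions of type 's \<times> 'a \<Rightarrow> real (with the product
  topology, i.e. the Euclidean topology of R^{SA}). Transition kernel
  P s a s' = P(s'|s,a); a stationary policy mu s a = mu(a|s).\<close>

definition is_mdp :: "('s::finite \<Rightarrow> 'a::finite \<Rightarrow> 's \<Rightarrow> real) \<Rightarrow> real \<Rightarrow> bool" where
  "is_mdp P \<gamma> \<longleftrightarrow> (\<forall>s a s'. 0 \<le> P s a s') \<and> (\<forall>s a. (\<Sum>s'\<in>UNIV. P s a s') = 1)
     \<and> 0 \<le> \<gamma> \<and> \<gamma> < 1"

definition is_policy :: "('s::finite \<Rightarrow> 'a::finite \<Rightarrow> real) \<Rightarrow> bool" where
  "is_policy \<mu> \<longleftrightarrow> (\<forall>s a. 0 \<le> \<mu> s a) \<and> (\<forall>s. (\<Sum>a\<in>UNIV. \<mu> s a) = 1)"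

definition Pmu :: "('s::finite \<Rightarrow> 'a::finite \<Rightarrow> 's \<Rightarrow> real) \<Rightarrow> ('s \<Rightarrow> 'a \<Rightarrow> real)
    \<Rightarrow> ('s \<times> 'a \<Rightarrow> real) \<Rightarrow> ('s \<times> 'a \<Rightarrow> real)" where
  "Pmu P \<mu> g = (\<lambda>(s,a). \<Sum>s'\<in>UNIV. \<Sum>a'\<in>UNIV. P s a s' * \<mu> s' a' * g (s',a'))"

definition bellman :: "('s::finite \<Rightarrow> 'a::finite \<Rightarrow> 's \<Rightarrow> real) \<Rightarrow> ('s \<times> 'a \<Rightarrow> real) \<Rightarrow> real
    \<Rightarrow> ('s \<Rightarrow> 'a \<Rightarrow> real) \<Rightarrow> ('s \<times> 'a \<Rightarrow> real) \<Rightarrow> ('s \<times> 'a \<Rightarrow> real)" where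
  "bellman P r \<gamma> \<mu> Q = (\<lambda>sa. r sa + \<gamma> * Pmu P \<mu> Q sa)"

text \<open>Q-value function: Q_mu(s,a) = sum_t gamma^t E[r(s_t,a_t) | s_0=s, a_0=a],
  where E[r(s_t,a_t)|s_0=s,a_0=a] = (P_mu^t r)(s,a).\<close>
definition Qval :: "('s::finite \<Rightarrow> 'a::finite \<Rightarrow> 's \<Rightarrow> real) \<Rightarrow> ('s \<times> 'a \<Rightarrow> real) \<Rightarrow> real
    \<Rightarrow> ('s \<Rightarrow> 'a \<Rightarrow> real) \<Rightarrow> ('s \<times> 'a \<Rightarrow> real)" where
  "Qval P r \<gamma> \<mu> = (\<lambda>sa. \<Sum>t. \<gamma> ^ t * (Pmu P \<mu> ^^ t) r sa)"

definition wnorm1 :: "('s::finite \<times> 'a::finite \<Rightarrow> real) \<Rightarrow> ('s \<times> 'a \<Rightarrow> real) \<Rightarrow> real" where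
  "wnorm1 w f = (\<Sum>sa\<in>UNIV. w sa * \<bar>f sa\<bar>)"

definition greedy_det :: "('s::finite \<Rightarrow> 'a::finite \<Rightarrow> real) \<Rightarrow> ('s \<times> 'a \<Rightarrow> real) \<Rightarrow> bool" where
  "greedy_det \<mu> f \<longleftrightarrow> (\<exists>d::'s \<Rightarrow> 'a.
      (\<forall>s a. \<mu> s a = (if a = d s then 1 else 0)) \<and> (\<forall>s a. f (s,a) \<le> f (s, d s)))"

end

theory Submission
  imports Defs
begin

text \<open>Every subsolution g \<le> T_mu g lies below Q_mu: iterating the monotone map T_mu gives
  g \<le> (\<Sum>t<n. \<gamma>^t P_mu^t r) + \<gamma>^n P_mu^n g, and the right-hand side tends to Q_mu.
  Hence f_(k+1) and every feasible g lie in the order interval [f_k, Q_mu_k]. On such an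
  interval the weighted l1 distance is additive, |Q - f_k| = |Q - g| + |g - f_k|, so a point
  farthest from f_k is nearest to Q_mu_k. Closedness of F, positivity of w and the
  hypotheses on f_0 only matter for the iterates to exist; the argument does not use them.\<close>

lemma Pmu_add: "Pmu P \<mu> (\<lambda>x. g x + h x) = (\<lambda>x. Pmu P \<mu> g x + Pmu P \<mu> h x)"
  by (rule ext) (auto simp: Pmu_def distrib_left sum.distrib)

lemma Pmu_mult: "Pmu P \<mu> (\<lambda>x. c * g x) = (\<lambda>x. c * Pmu P \<mu> g x)"
  by (rule ext) (auto simp: Pmu_def sum_distrib_left mult_ac)

lemma funpow_Pmu_add:
  "(Pmu P \<mu> ^^ n) (\<lambda>x. g x + h x) = (\<lambda>x. (Pmu P \<mu> ^^ n) g x + (Pmu P \<mu> ^^ n) h x)"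
  by (induction n) (auto simp: Pmu_add)

lemma funpow_Pmu_mult: "(Pmu P \<mu> ^^ n) (\<lambda>x. c * g x) = (\<lambda>x. c * (Pmu P \<mu> ^^ n) g x)"
  by (induction n) (auto simp: Pmu_mult)

lemma abs_le_sum_abs_UNIV: "\<bar>g y\<bar> \<le> (\<Sum>z\<in>UNIV. \<bar>g z\<bar>)" for g :: "'b::finite \<Rightarrow> real"
  by (rule member_le_sum[of y UNIV "\<lambda>z. \<bar>g z\<bar>"]) auto

lemma greedy_det_is_policy: "greedy_det \<mu> f \<Longrightarrow> is_policy \<mu>"
  unfolding greedy_det_def is_policy_def by auto

context
  fixes P :: "'s::finite \<Rightarrow> 'a::finite \<Rightarrow> 's \<Rightarrow> real" and \<mu> :: "'s \<Rightarrow> 'a \<Rightarrow> real"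
  assumes P_nonneg: "\<And>s a s'. 0 \<le> P s a s'"
    and P_sum: "\<And>s a. (\<Sum>s'\<in>UNIV. P s a s') = 1"
    and policy: "is_policy \<mu>"
begin

lemma Pmu_const: "Pmu P \<mu> (\<lambda>_. c) = (\<lambda>_. c)"
proof -
  have "(\<Sum>s'\<in>UNIV. \<Sum>a'\<in>UNIV. P s a s' * \<mu> s' a' * c) = c" for s a
    using policy P_sum
    by (simp add: is_policy_def flip: sum_distrib_left sum_distrib_right mult.assoc)
  then show ?thesis
    by (auto simp: Pmu_def)
qed

lemma Pmu_mono: "g \<le> h \<Longrightarrow> Pmu P \<mu> g \<le> Pmu P \<mu> h"
  using P_nonneg policy
  by (auto simp: Pmu_def le_fun_def is_policy_def intro!: sum_mono mult_left_mono)

lemma funpow_Pmu_mono: "g \<le> h \<Longrightarrow> (Pmu P \<mu> ^^ n) g \<le> (Pmu P \<mu> ^^ n) h"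
  by (induction n) (auto intro: Pmu_mono)

lemma funpow_Pmu_const: "(Pmu P \<mu> ^^ n) (\<lambda>_. c) = (\<lambda>_. c)"
  by (induction n) (auto simp: Pmu_const)

lemma abs_funpow_Pmu_le:
  assumes "\<And>y. \<bar>g y\<bar> \<le> B"
  shows "\<bar>(Pmu P \<mu> ^^ n) g x\<bar> \<le> B"
proof -
  have "- B \<le> g y" "g y \<le> B" for y
    using assms[of y] by linarith+
  then have lower: "(\<lambda>_. - B) \<le> g" and upper: "g \<le> (\<lambda>_. B)"
    by (simp_all add: le_fun_def)
  have "(\<lambda>_. - B) \<le> (Pmu P \<mu> ^^ n) g"
    using funpow_Pmu_mono[OF lower] by (simp only: funpow_Pmu_const)
  moreover have "(Pmu P \<mu> ^^ n) g \<le> (\<lambda>_. B)"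
    using funpow_Pmu_mono[OF upper] by (simp only: funpow_Pmu_const)
  ultimately show ?thesis
    using le_funD[of _ _ x] by (metis abs_le_iff minus_le_iff)
qed

lemma abs_discounted_funpow_Pmu_le:
  assumes "0 \<le> \<gamma>" "\<And>y. \<bar>g y\<bar> \<le> B"
  shows "\<bar>\<gamma> ^ n * (Pmu P \<mu> ^^ n) g x\<bar> \<le> B * \<gamma> ^ n"
proof -
  have "\<bar>(Pmu P \<mu> ^^ n) g x\<bar> \<le> B"
    using assms(2) by (rule abs_funpow_Pmu_le)
  then show ?thesis
    using assms(1) by (auto simp: abs_mult mult.commute[of "\<gamma> ^ n"] intro: mult_right_mono)
qed

lemma Qval_sums:
  assumes "0 \<le> \<gamma>" "\<gamma> < 1"
  shows "(\<lambda>t. \<gamma> ^ t * (Pmu P \<mu> ^^ t) r x) sums Qval P r \<gamma> \<mu> x"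
proof -
  have "summable (\<lambda>t. (\<Sum>z\<in>UNIV. \<bar>r z\<bar>) * \<gamma> ^ t)"
    using assms by (intro summable_mult summable_geometric) auto
  moreover have "norm (\<gamma> ^ t * (Pmu P \<mu> ^^ t) r x) \<le> (\<Sum>z\<in>UNIV. \<bar>r z\<bar>) * \<gamma> ^ t" for t
    unfolding real_norm_def using assms(1) abs_le_sum_abs_UNIV
    by (rule abs_discounted_funpow_Pmu_le)
  ultimately have "summable (\<lambda>t. \<gamma> ^ t * (Pmu P \<mu> ^^ t) r x)"
    by (rule summable_comparison_test')
  then show ?thesis
    unfolding Qval_def by (rule summable_sums)
qed

lemma sub_bellman_le_partial_sums:
  assumes "0 \<le> \<gamma>" and sub: "g \<le> bellman P r \<gamma> \<mu> g"
  shows "g x \<le> (\<Sum>t<n. \<gamma> ^ t * (Pmu P \<mu> ^^ t) r x) + \<gamma> ^ n * (Pmu P \<mu> ^^ n) g x"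
proof (induction n)
  case 0
  then show ?case by simp
next
  case (Suc n)
  let ?M = "Pmu P \<mu>"
  have "(?M ^^ n) g \<le> (?M ^^ n) (\<lambda>y. r y + \<gamma> * ?M g y)"
    using sub unfolding bellman_def by (rule funpow_Pmu_mono)
  also have "\<dots> = (\<lambda>y. (?M ^^ n) r y + \<gamma> * (?M ^^ Suc n) g y)"
    by (simp add: funpow_Pmu_add funpow_Pmu_mult funpow_Suc_right del: funpow.simps)
  finally have "(?M ^^ n) g x \<le> (?M ^^ n) r x + \<gamma> * (?M ^^ Suc n) g x"
    by (rule le_funD)
  then have "\<gamma> ^ n * (?M ^^ n) g x \<le> \<gamma> ^ n * ((?M ^^ n) r x + \<gamma> * (?M ^^ Suc n) g x)"
    using assms(1) by (simp add: mult_left_mono)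
  also have "\<dots> = \<gamma> ^ n * (?M ^^ n) r x + \<gamma> ^ Suc n * (?M ^^ Suc n) g x"
    by (simp add: algebra_simps)
  finally show ?case
    using Suc by simp
qed

lemma sub_bellman_le_Qval:
  assumes "0 \<le> \<gamma>" "\<gamma> < 1" and sub: "g \<le> bellman P r \<gamma> \<mu> g"
  shows "g \<le> Qval P r \<gamma> \<mu>"
proof (rule le_funI)
  fix x
  let ?M = "Pmu P \<mu>"
  have "(\<lambda>n. \<Sum>t<n. \<gamma> ^ t * (?M ^^ t) r x) \<longlonglongrightarrow> Qval P r \<gamma> \<mu> x"
    using Qval_sums[OF assms(1,2)] by (simp add: sums_def)
  moreover have "(\<lambda>n. \<gamma> ^ n * (?M ^^ n) g x) \<longlonglongrightarrow> 0"
  proof (rule Lim_null_comparison)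
    show "\<forall>\<^sub>F n in sequentially. norm (\<gamma> ^ n * (?M ^^ n) g x) \<le> (\<Sum>z\<in>UNIV. \<bar>g z\<bar>) * \<gamma> ^ n"
      unfolding real_norm_def using assms(1) abs_le_sum_abs_UNIV
      by (intro always_eventually allI abs_discounted_funpow_Pmu_le)
    show "(\<lambda>n. (\<Sum>z\<in>UNIV. \<bar>g z\<bar>) * \<gamma> ^ n) \<longlonglongrightarrow> 0"
      using assms(1,2) by (intro tendsto_mult_right_zero LIMSEQ_power_zero) auto
  qed
  ultimately have "(\<lambda>n. (\<Sum>t<n. \<gamma> ^ t * (?M ^^ t) r x) + \<gamma> ^ n * (?M ^^ n) g x)
      \<longlonglongrightarrow> Qval P r \<gamma> \<mu> x"
    using tendsto_add by fastforce
  then show "g x \<le> Qval P r \<gamma> \<mu> x"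
    by (rule LIMSEQ_le_const) (blast intro: sub_bellman_le_partial_sums[OF assms(1) sub])
qed

end

lemma wnorm1_minus_commute: "wnorm1 w (f - g) = wnorm1 w (g - f)"
  unfolding wnorm1_def by (simp add: abs_minus_commute)

lemma wnorm1_chain_add:
  assumes "a \<le> h" "h \<le> q"
  shows "wnorm1 w (q - a) = wnorm1 w (q - h) + wnorm1 w (h - a)"
proof -
  have "\<bar>q x - a x\<bar> = \<bar>q x - h x\<bar> + \<bar>h x - a x\<bar>" for x
    using le_funD[OF assms(1), of x] le_funD[OF assms(2), of x] by simp
  then show ?thesis
    unfolding wnorm1_def by (simp add: distrib_left sum.distrib)
qed

lemma wnorm1_farthest_from_lower_is_nearest_to_upper:
  assumes "a \<le> h" "h \<le> q" "a \<le> g" "g \<le> q"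
    and "wnorm1 w (g - a) \<le> wnorm1 w (h - a)"
  shows "wnorm1 w (h - q) \<le> wnorm1 w (g - q)"
  using wnorm1_chain_add[OF assms(1,2), of w] wnorm1_chain_add[OF assms(3,4), of w] assms(5)
  by (simp add: wnorm1_minus_commute[of w h] wnorm1_minus_commute[of w g])

theorem theorem3:
  fixes P :: "'s::finite \<Rightarrow> 'a::finite \<Rightarrow> 's \<Rightarrow> real"
    and r :: "'s \<times> 'a \<Rightarrow> real" and \<gamma> :: real
    and F :: "('s \<times> 'a \<Rightarrow> real) set"
    and w :: "'s \<times> 'a \<Rightarrow> real"
    and f :: "nat \<Rightarrow> 's \<times> 'a \<Rightarrow> real"
    and \<mu> :: "nat \<Rightarrow> 's \<Rightarrow> 'a \<Rightarrow> real"
  assumes mdp: "is_mdp P \<gamma>"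
    and closedF: "closed F"
    and wpos: "\<forall>sa. 0 < w sa"
    and mu0: "is_policy (\<mu> 0)"
    and f0: "f 0 \<in> F"
    and init: "f 0 \<le> bellman P r \<gamma> (\<mu> 0) (f 0)"
    and rpi: "\<forall>k. f (Suc k) \<in> F
              \<and> f (Suc k) \<le> bellman P r \<gamma> (\<mu> k) (f (Suc k)) \<and> f k \<le> f (Suc k)
              \<and> (\<forall>g\<in>F. g \<le> bellman P r \<gamma> (\<mu> k) g \<and> f k \<le> g
                   \<longrightarrow> wnorm1 w (g - f k) \<le> wnorm1 w (f (Suc k) - f k))"
    and greedy: "\<forall>k. greedy_det (\<mu> (Suc k)) (f (Suc k))"
  shows "\<forall>k. f (Suc k) \<in> F
              \<and> f (Suc k) \<le> bellman P r \<gamma> (\<mu> k) (f (Suc k)) \<and> f k \<le> f (Suc k)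
              \<and> (\<forall>g\<in>F. g \<le> bellman P r \<gamma> (\<mu> k) g \<and> f k \<le> g
                   \<longrightarrow> wnorm1 w (f (Suc k) - Qval P r \<gamma> (\<mu> k))
                       \<le> wnorm1 w (g - Qval P r \<gamma> (\<mu> k)))"
proof (intro allI conjI ballI impI)
  fix k
  have policy: "is_policy (\<mu> k)"
    using mu0 greedy greedy_det_is_policy by (cases k) auto
  have le_Qval: "h \<le> bellman P r \<gamma> (\<mu> k) h \<Longrightarrow> h \<le> Qval P r \<gamma> (\<mu> k)" for h
    using mdp policy by (intro sub_bellman_le_Qval) (auto simp: is_mdp_def)
  show "f (Suc k) \<in> F"
    using rpi by blast
  show step: "f (Suc k) \<le> bellman P r \<gamma> (\<mu> k) (f (Suc k))" "f k \<le> f (Suc k)"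
    using rpi by blast+
  fix g
  assume "g \<in> F" and g: "g \<le> bellman P r \<gamma> (\<mu> k) g \<and> f k \<le> g"
  then have farthest: "wnorm1 w (g - f k) \<le> wnorm1 w (f (Suc k) - f k)"
    using rpi by blast
  show "wnorm1 w (f (Suc k) - Qval P r \<gamma> (\<mu> k)) \<le> wnorm1 w (g - Qval P r \<gamma> (\<mu> k))"
    using step(2) le_Qval[OF step(1)] conjunct2[OF g] le_Qval[OF conjunct1[OF g]] farthest
    by (rule wnorm1_farthest_from_lower_is_nearest_to_upper)
qed

end
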